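(* Let $n\ge4$ be even. Let the additive group $\Lambda=\mathbb R^n$ act on $\mathbb R^{E_n}$ by $\lambda\cdot y=(\lambda_i+\lambda_j+y_{\{i,j\}})_{\{i,j\}\in E_n}$ for $\lambda\in\Lambda$, $y\in\mathbb R^{E_n}$. Then every $\Lambda$-invariant subset of $\mathbb R^{E_n}$ is fiber-invariant for the linear map $f:\mathbb R^{E_n}\to\mathbb R^{\mathcal M_n}$, $f(y)=(y_M)_{M\in\mathcal M_n}$, where $y_M=\sum_{e\in M}y_e$.
   Context: $E_n$ is the set of edges of the complete graph on $[n]=\{1,\dots,n\}$ and $\mathcal M_n$ is the set of its perfect matchings. For a map $f:X\to Y$, $D\subseteq X$ is fiber-invariant for $f$ if for each $y\in f(D)$ the fiber $f^{-1}(y)$ is contained in $D$. *)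

theory Defs
  imports Complex_Main "HOL-Library.FuncSet"
begin

definition edges :: "nat \<Rightarrow> nat set set" where
  "edges n = {e. e \<subseteq> {1..n} \<and> card e = 2}"

definition matchings :: "nat \<Rightarrow> nat set set set" where
  "matchings n = {M. M \<subseteq> edges n \<and>
      (\<forall>e\<in>M. \<forall>e'\<in>M. e \<noteq> e' \<longrightarrow> e \<inter> e' = {}) \<and> \<Union>M = {1..n}}"

definition RE :: "nat \<Rightarrow> (nat set \<Rightarrow> real) set" where
  "RE n = edges n \<rightarrow>\<^sub>E (UNIV :: real set)"

definition Lam :: "nat \<Rightarrow> (nat \<Rightarrow> real) set" where
  "Lam n = {1..n} \<rightarrow>\<^sub>E (UNIV :: real set)"

definition act :: "nat \<Rightarrow> (nat \<Rightarrow> real) \<Rightarrow> (nat set \<Rightarrow> real) \<Rightarrow> (nat set \<Rightarrow> real)" where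
  "act n lam y = (\<lambda>e\<in>edges n. (\<Sum>i\<in>e. lam i) + y e)"

definition Lam_invariant :: "nat \<Rightarrow> (nat set \<Rightarrow> real) set \<Rightarrow> bool" where
  "Lam_invariant n D \<longleftrightarrow> (\<forall>lam\<in>Lam n. \<forall>y\<in>D. act n lam y \<in> D)"

definition fmap :: "nat \<Rightarrow> (nat set \<Rightarrow> real) \<Rightarrow> (nat set set \<Rightarrow> real)" where
  "fmap n y = (\<lambda>M\<in>matchings n. \<Sum>e\<in>M. y e)"

definition fiber_invariant :: "'a set \<Rightarrow> ('a \<Rightarrow> 'b) \<Rightarrow> 'a set \<Rightarrow> bool" where
  "fiber_invariant X f D \<longleftrightarrow> (\<forall>y\<in>f ` D. {x\<in>X. f x = y} \<subseteq> D)"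

end

theory Submission
  imports Defs
begin

text \<open>
  If \<open>f x = f y\<close>, then \<open>z = x - y\<close> sums to zero over every perfect matching. Fix a perfect
  matching of the vertices outside four distinct vertices \<open>i, j, k, l\<close> and complete it once by
  \<open>{ij, kl}\<close> and once by \<open>{ik, jl}\<close>: this yields the exchange law
  \<open>z\<^sub>i\<^sub>j + z\<^sub>k\<^sub>l = z\<^sub>i\<^sub>k + z\<^sub>j\<^sub>l\<close>. The exchange law in turn forces
  \<open>z\<^sub>i\<^sub>j = \<lambda>\<^sub>i + \<lambda>\<^sub>j\<close> for some \<open>\<lambda>\<close>, i.e. \<open>x = \<lambda> \<cdot> y\<close>, so \<open>x\<close> lies in every
  \<open>\<Lambda>\<close>-invariant set containing \<open>y\<close>.
\<close>

definition perfect_matching_on :: "'a set \<Rightarrow> 'a set set \<Rightarrow> bool" where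
  "perfect_matching_on V M \<longleftrightarrow> (\<forall>e\<in>M. card e = 2) \<and> pairwise disjnt M \<and> \<Union>M = V"

lemma matchings_eq: "matchings n = {M. perfect_matching_on {1..n} M}"
  unfolding matchings_def edges_def perfect_matching_on_def pairwise_def disjnt_def by auto

lemma perfect_matching_on_insert_pair:
  assumes "perfect_matching_on V M" "a \<notin> V" "b \<notin> V" "a \<noteq> b"
  shows "perfect_matching_on (insert a (insert b V)) (insert {a,b} M)"
proof -
  have "disjnt {a,b} e" if "e \<in> M" for e
    using assms(1-3) that unfolding perfect_matching_on_def disjnt_def by blast
  then show ?thesis
    using assms unfolding perfect_matching_on_def by (auto simp: pairwise_insert disjnt_sym)
qed

lemma perfect_matching_on_finite:
  assumes "finite V" "perfect_matching_on V M"
  shows "finite M"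
proof (rule finite_subset)
  show "M \<subseteq> Pow V" using assms(2) unfolding perfect_matching_on_def by blast
qed (use assms(1) in simp)

lemma perfect_matching_on_exists:
  assumes "finite V" "even (card V)"
  shows "\<exists>M. perfect_matching_on V M"
  using assms
proof (induction "card V" arbitrary: V rule: less_induct)
  case less
  show ?case
  proof (cases "V = {}")
    case True
    then have "perfect_matching_on V {}" by (simp add: perfect_matching_on_def)
    then show ?thesis by blast
  next
    case False
    then obtain a where a: "a \<in> V" by blast
    have "odd (card (V - {a}))"
      using less.prems a False by (simp add: card_Diff_singleton card_gt_0_iff)
    then obtain b where b: "b \<in> V" "b \<noteq> a"
      by (metis Diff_iff all_not_in_conv card.empty even_zero singletonI)
    let ?W = "V - {a,b}"
    have "card ?W = card V - 2"
      using a b less.prems(1) by (simp add: card_Diff_subset)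
    moreover have "card V \<ge> 2"
      using a b less.prems(1) card_mono[of V "{a,b}"] by auto
    ultimately obtain M where "perfect_matching_on ?W M"
      using less.hyps[of ?W] less.prems by auto
    moreover have "V = insert a (insert b ?W)" using a b by blast
    ultimately show ?thesis
      using perfect_matching_on_insert_pair[of ?W M a b] b by auto
  qed
qed

lemma perfect_matching_sums_zero_exchange:
  fixes z :: "'a set \<Rightarrow> 'b::ab_group_add"
  assumes "finite V" "even (card V)"
    and zero: "\<And>M. perfect_matching_on V M \<Longrightarrow> (\<Sum>e\<in>M. z e) = 0"
    and "{i,j,k,l} \<subseteq> V" "distinct [i,j,k,l]"
  shows "z {i,j} + z {k,l} = z {i,k} + z {j,l}"
proof -
  let ?W = "V - {i,j,k,l}"
  have "card ?W = card V - 4"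
    using assms(1,4,5) by (simp add: card_Diff_subset)
  moreover have "card V \<ge> 4"
    using assms(1,4,5) card_mono[of V "{i,j,k,l}"] by auto
  ultimately obtain M where M: "perfect_matching_on ?W M"
    using perfect_matching_on_exists[of ?W] assms(1,2) by auto
  have finite_M: "finite M"
    using perfect_matching_on_finite[OF _ M] assms(1) by blast
  have pair_sum: "z {a,b} + z {c,d} = - (\<Sum>e\<in>M. z e)"
    if abcd: "{a,b,c,d} = {i,j,k,l}" "distinct [a,b,c,d]" for a b c d
  proof -
    let ?M = "insert {a,b} (insert {c,d} M)"
    have "{a,b,c,d} \<union> ?W = V" using abcd(1) assms(4) by auto
    then have "insert a (insert b (insert c (insert d ?W))) = V" by simp
    moreover have "perfect_matching_on (insert a (insert b (insert c (insert d ?W)))) ?M"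
      by (intro perfect_matching_on_insert_pair) (use M abcd in auto)
    ultimately have "(\<Sum>e\<in>?M. z e) = 0" using zero by simp
    moreover have "{a,b} \<notin> M" "{c,d} \<notin> M" "{a,b} \<noteq> {c,d}"
      using M abcd unfolding perfect_matching_on_def by (auto simp: doubleton_eq_iff)
    then have "(\<Sum>e\<in>?M. z e) = z {a,b} + z {c,d} + (\<Sum>e\<in>M. z e)"
      using finite_M by (simp add: add.assoc)
    ultimately show ?thesis by (simp add: eq_neg_iff_add_eq_0)
  qed
  have "z {i,j} + z {k,l} = - (\<Sum>e\<in>M. z e)"
    by (rule pair_sum) (use assms(5) in auto)
  moreover have "z {i,k} + z {j,l} = - (\<Sum>e\<in>M. z e)"
    by (rule pair_sum) (use assms(5) in auto)
  ultimately show ?thesis by simp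
qed

lemma exchange_law_imp_vertex_sum:
  fixes z :: "'a set \<Rightarrow> 'b::field_char_0"
  assumes abc: "{a,b,c} \<subseteq> V" "distinct [a,b,c]"
    and exch: "\<And>i j k l. {i,j,k,l} \<subseteq> V \<Longrightarrow> distinct [i,j,k,l] \<Longrightarrow>
                 z {i,j} + z {k,l} = z {i,k} + z {j,l}"
  shows "\<exists>lam. \<forall>i\<in>V. \<forall>j\<in>V. i \<noteq> j \<longrightarrow> lam i + lam j = z {i,j}"
proof -
  text \<open>\<open>h i p q\<close> is \<open>\<lambda>\<^sub>i\<close> solved from the triangle \<open>i, p, q\<close>; the exchange law
    makes it independent of \<open>p\<close> and \<open>q\<close>.\<close>
  define h where "h i p q = (z {i,p} + z {i,q} - z {p,q}) / 2" for i p q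
  have h_comm: "h i p q = h i q p" for i p q
    by (simp add: h_def insert_commute add.commute)
  have h_pair: "h i j q + h j i q = z {i,j}" for i j q
    by (simp add: h_def insert_commute field_simps)
  have h_move: "h i p q = h i p q'" if "{i,p,q,q'} \<subseteq> V" "distinct [i,p,q,q']" for i p q q'
  proof -
    have "z {i,q} + z {q',p} = z {i,q'} + z {q,p}"
      by (rule exch) (use that in auto)
    then have "z {i,q} + z {p,q'} = z {i,q'} + z {p,q}"
      by (simp add: insert_commute)
    then have "z {i,p} + z {i,q} - z {p,q} = z {i,p} + z {i,q'} - z {p,q'}"
      by (simp add: algebra_simps)
    then show ?thesis
      unfolding h_def by (rule arg_cong)
  qed
  have h_sum: "h i p q + h j p q = z {i,j}" if "{i,j,p,q} \<subseteq> V" "distinct [i,j,p,q]" for i j p q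
  proof -
    have "z {i,j} + z {p,q} = z {i,p} + z {j,q}" "z {i,j} + z {q,p} = z {i,q} + z {j,p}"
      by (rule exch; use that in auto)+
    then have "z {i,p} + z {j,q} = z {i,j} + z {p,q}" "z {i,q} + z {j,p} = z {i,j} + z {p,q}"
      by (simp_all add: insert_commute)
    moreover have "h i p q + h j p q = ((z {i,p} + z {j,q}) + (z {i,q} + z {j,p}) - 2 * z {p,q}) / 2"
      by (simp add: h_def field_simps)
    ultimately show ?thesis by simp
  qed
  define lam where "lam i = (if i = a then h a b c else if i = b then h b a c else h i a b)" for i
  have lam_ab: "lam a + lam b = z {a,b}"
    using abc h_pair by (simp add: lam_def)
  have lam_a: "lam a + lam j = z {a,j}" if "j \<in> V - {a,b}" for j
  proof -
    have "h a b c = h a j b"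
      using h_move[of a b c j] h_comm[of a b j] h_comm[of a b c] abc that by (cases "j = c") auto
    then show ?thesis using h_pair[of a j b] abc that by (simp add: lam_def)
  qed
  have lam_b: "lam b + lam j = z {b,j}" if "j \<in> V - {a,b}" for j
  proof -
    have "h b a c = h b j a"
      using h_move[of b a c j] h_comm[of b a j] h_comm[of b a c] abc that by (cases "j = c") auto
    then show ?thesis using h_pair[of b j a] h_comm[of j a b] abc that by (auto simp: lam_def)
  qed
  have lam_other: "lam i + lam j = z {i,j}" if "i \<in> V - {a,b}" "j \<in> V - {a,b}" "i \<noteq> j" for i j
    using h_sum[of i j a b] abc that by (simp add: lam_def)
  have lam_swap: "lam j + lam i = z {j,i}" if "lam i + lam j = z {i,j}" for i j
    using that by (simp add: add.commute insert_commute)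
  have "lam i + lam j = z {i,j}" if "i \<in> V" "j \<in> V" "i \<noteq> j" for i j
    using that lam_ab lam_a lam_b lam_other
      lam_swap[OF lam_ab] lam_swap[OF lam_a] lam_swap[OF lam_b]
    by (cases "i \<in> {a,b}"; cases "j \<in> {a,b}") auto
  then show ?thesis by blast
qed

lemma edgesE:
  assumes "e \<in> edges n"
  obtains i j where "e = {i,j}" "i \<noteq> j" "i \<in> {1..n}" "j \<in> {1..n}"
  using assms unfolding edges_def by (auto simp: card_2_iff)

lemma fmap_fiber_subset_orbit:
  assumes "even n" "n \<ge> 4" "x \<in> RE n" "y \<in> RE n" "fmap n x = fmap n y"
  shows "\<exists>lam\<in>Lam n. act n lam y = x"
proof -
  let ?z = "\<lambda>e. x e - y e"
  have zero: "(\<Sum>e\<in>M. ?z e) = 0" if "perfect_matching_on {1..n} M" for M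
    using fun_cong[OF assms(5), of M] that by (simp add: fmap_def matchings_eq sum_subtractf)
  have exch: "?z {i,j} + ?z {k,l} = ?z {i,k} + ?z {j,l}"
    if "{i,j,k,l} \<subseteq> {1..n}" "distinct [i,j,k,l]" for i j k l
    using perfect_matching_sums_zero_exchange[OF _ _ zero that] assms(1) by simp
  obtain lam where lam: "\<forall>i\<in>{1..n}. \<forall>j\<in>{1..n}. i \<noteq> j \<longrightarrow> lam i + lam j = ?z {i,j}"
    using exchange_law_imp_vertex_sum[of 1 2 3 "{1..n}" ?z, OF _ _ exch] assms(2) by auto
  have "act n (restrict lam {1..n}) y e = x e" for e
  proof (cases "e \<in> edges n")
    case True
    then obtain i j where "e = {i,j}" "i \<noteq> j" "i \<in> {1..n}" "j \<in> {1..n}" by (rule edgesE)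
    then show ?thesis using lam True by (simp add: act_def)
  next
    case False
    then show ?thesis using assms(3) by (simp add: act_def RE_def PiE_arb[of x "edges n"])
  qed
  moreover have "restrict lam {1..n} \<in> Lam n" by (simp add: Lam_def)
  ultimately show ?thesis by blast
qed

theorem theorem4p6:
  fixes n :: nat and D :: "(nat set \<Rightarrow> real) set"
  assumes "even n" and "n \<ge> 4"
    and "D \<subseteq> RE n"
    and "Lam_invariant n D"
  shows "fiber_invariant (RE n) (fmap n) D"
proof -
  have "x \<in> D" if x: "x \<in> RE n" and y: "y \<in> D" and fxy: "fmap n x = fmap n y" for x y
  proof -
    have "y \<in> RE n" using assms(3) y by blast
    then obtain lam where "lam \<in> Lam n" "act n lam y = x"
      using fmap_fiber_subset_orbit[OF assms(1,2) x _ fxy] by blast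
    then show ?thesis using assms(4) y unfolding Lam_invariant_def by blast
  qed
  then show ?thesis unfolding fiber_invariant_def by auto
qed

end
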